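(* Let $x^*$ be a stationary point of $\min_xF(x)=f(x)+\Psi(x)$, i.e. $0\in\nabla f(x^* )+\partial\Psi(x^* )$. Suppose $\Psi$ is partly smooth at $x^*$ relative to a manifold $\mathcal{M}$, with a local $\mathcal{C}^2$ parameterization $\phi$ of $\mathcal{M}$ and a point $y^*$ with $\phi(y^* )=x^*$, and let $F_\phi:=F\circ\phi$. Assume that there is a neighborhood $U$ of $y^*$ such that $V\succeq0$ for every $V\in\partial(\nabla F_\phi)(y)$ and every $y\in U$, and that $\nabla F_\phi$ is strongly semismooth at $y^*$. Fix $c>0$ and $\rho\in(0,1]$. For $y^t\in U$ define $g^t:=\nabla F_\phi(y^t)$, $\mu_t:=c\|g^t\|^{\rho}$, $H_t:=V_t+\mu_tI$ with $V_t\in\partial(\nabla F_\phi)(y^t)$, and $d_t:=\|y^t-y^*\|$. Then for $y^t\in U$, any $q^t$ satisfying $$\|H_tq^t+g^t\|\le0.1\min\{\|g^t\|,\|g^t\|^{1+\rho}\}$$ obeys $$\|q^t\|\le2d_t+\mu_t^{-1}O(d_t^2)+0.1\mu_t^{-1}\|g^t\|^{1+\rho},$$ where $O(\cdot)$ is with respect to $d_t\to0$.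
   Context: Standing setting: $\mathcal{H}$ is a Euclidean space; $f:\mathcal{H}\to\mathbb{R}$ is continuously differentiable with Lipschitz gradient; $\Psi:\mathcal{H}\to(-\infty,\infty]$ is convex, proper, lower semicontinuous. Partial smoothness: $\Psi$ is partly smooth at $x^*$ relative to $\mathcal{M}\ni x^*$ if $\partial\Psi(x^* )\ne\emptyset$ and (i) near $x^*$, $\mathcal{M}$ is a $\mathcal{C}^2$ manifold and $\Psi|_{\mathcal{M}}$ is $\mathcal{C}^2$; (ii) the affine span of $\partial\Psi(x^* )$ is a translate of the normal space to $\mathcal{M}$ at $x^*$; (iii) $\partial\Psi$ is continuous at $x^*$ relative to $\mathcal{M}$; (iv) $\Psi$ is regular at points of $\mathcal{M}$ near $x^*$ with nonempty subdifferential. A local parameterization of a $p$-dimensional $\mathcal{C}^2$ manifold $\mathcal{M}$ around $x^*$ is a $\mathcal{C}^2$ map $\phi:\mathbb{R}^p\to\mathcal{M}$ with $\phi(y^* )=x^*$ and injective derivative at $y^*$, describing a neighborhood of $x^*$ in $\mathcal{M}$. $\partial(\nabla F_\phi)(y)$ is the (Clarke) generalized Jacobian of $\nabla F_\phi$ at $y$ (generalized Hessian of $F_\phi$). $\nabla F_\phi$ is strongly semismooth at $y^*$ if it is directionally differentiable at $y^*$ and for any $V\in\partial(\nabla F_\phi)(y^*+\Delta y)$, as $\Delta y\to0$, $\nabla F_\phi(y^*+\Delta y)-\nabla F_\phi(y^* )-V\Delta y=O(\|\Delta y\|^2)$. *)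

theory Defs
  imports "HOL-Analysis.Analysis"
begin

definition grad :: "('a::real_inner \<Rightarrow> real) \<Rightarrow> 'a \<Rightarrow> 'a" where
  "grad h x = (SOME g. (h has_derivative (\<lambda>v. g \<bullet> v)) (at x))"

definition C1_on :: "'a::real_normed_vector set \<Rightarrow> ('a \<Rightarrow> 'b::real_normed_vector) \<Rightarrow> bool" where
  "C1_on W g \<longleftrightarrow> (\<exists>g'. (\<forall>x\<in>W. (g has_derivative blinfun_apply (g' x)) (at x)) \<and> continuous_on W g')"

definition C2_on :: "'a::real_normed_vector set \<Rightarrow> ('a \<Rightarrow> 'b::real_normed_vector) \<Rightarrow> bool" where
  "C2_on W g \<longleftrightarrow> (\<exists>g'. (\<forall>x\<in>W. (g has_derivative blinfun_apply (g' x)) (at x)) \<and> C1_on W g')"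

definition C2_manifold_near :: "'a::euclidean_space set \<Rightarrow> 'a \<Rightarrow> bool" where
  "C2_manifold_near M x0 \<longleftrightarrow>
     (\<exists>W (k::nat) (\<Phi>::nat \<Rightarrow> 'a \<Rightarrow> real). open W \<and> x0 \<in> W \<and> (\<forall>i<k. C2_on W (\<Phi> i)) \<and>
        (\<forall>x\<in>W. \<forall>a. (\<Sum>i<k. a i *\<^sub>R grad (\<Phi> i) x) = 0 \<longrightarrow> (\<forall>i<k. a i = 0)) \<and>
        M \<inter> W = {x\<in>W. \<forall>i<k. \<Phi> i x = 0})"

definition tangent_space :: "'a::euclidean_space set \<Rightarrow> 'a \<Rightarrow> 'a set" where
  "tangent_space M x = {v. \<exists>(\<gamma>::real \<Rightarrow> 'a) e. e > 0 \<and> \<gamma> 0 = x \<and> (\<forall>t. \<bar>t\<bar> < e \<longrightarrow> \<gamma> t \<in> M) \<and>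
                            (\<gamma> has_vector_derivative v) (at 0)}"

definition normal_space :: "'a::euclidean_space set \<Rightarrow> 'a \<Rightarrow> 'a set" where
  "normal_space M x = {w. \<forall>v\<in>tangent_space M x. w \<bullet> v = 0}"

definition subdiff :: "('a::real_inner \<Rightarrow> ereal) \<Rightarrow> 'a \<Rightarrow> 'a set" where
  "subdiff \<Psi> x = {v. \<Psi> x \<noteq> \<infinity> \<and> (\<forall>z. \<Psi> x + ereal (v \<bullet> (z - x)) \<le> \<Psi> z)}"

definition epigraph_e :: "('a \<Rightarrow> ereal) \<Rightarrow> ('a \<times> real) set" where
  "epigraph_e \<Psi> = {(x, r). \<Psi> x \<le> ereal r}"

definition proper_fun :: "('a \<Rightarrow> ereal) \<Rightarrow> bool" where
  "proper_fun \<Psi> \<longleftrightarrow> (\<forall>x. \<Psi> x \<noteq> -\<infinity>) \<and> (\<exists>x. \<Psi> x \<noteq> \<infinity>)"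

definition convex_efun :: "('a::real_vector \<Rightarrow> ereal) \<Rightarrow> bool" where
  "convex_efun \<Psi> \<longleftrightarrow> convex (epigraph_e \<Psi>)"

definition lsc_efun :: "('a::topological_space \<Rightarrow> ereal) \<Rightarrow> bool" where
  "lsc_efun \<Psi> \<longleftrightarrow> closed (epigraph_e \<Psi>)"

text \<open>Continuity (Painleve-Kuratowski) of the subdifferential map at x0 relative to M.\<close>
definition subdiff_continuous_rel :: "('a::euclidean_space \<Rightarrow> ereal) \<Rightarrow> 'a set \<Rightarrow> 'a \<Rightarrow> bool" where
  "subdiff_continuous_rel \<Psi> M x0 \<longleftrightarrow>
     (\<forall>xs v. (\<forall>k. xs k \<in> M) \<and> xs \<longlonglongrightarrow> x0 \<and> v \<in> subdiff \<Psi> x0 \<longrightarrow>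
        (\<exists>vs. (\<forall>\<^sub>F k in sequentially. vs k \<in> subdiff \<Psi> (xs k)) \<and> vs \<longlonglongrightarrow> v)) \<and>
     (\<forall>xs vs v. (\<forall>k. xs k \<in> M) \<and> xs \<longlonglongrightarrow> x0 \<and> (\<forall>k. vs k \<in> subdiff \<Psi> (xs k)) \<and> vs \<longlonglongrightarrow> v
        \<longrightarrow> v \<in> subdiff \<Psi> x0)"

definition partly_smooth :: "('a::euclidean_space \<Rightarrow> ereal) \<Rightarrow> 'a \<Rightarrow> 'a set \<Rightarrow> bool" where
  "partly_smooth \<Psi> x0 M \<longleftrightarrow>
     x0 \<in> M \<and> subdiff \<Psi> x0 \<noteq> {} \<and>
     \<comment> \<open>(i)\<close>
     C2_manifold_near M x0 \<and>
     (\<exists>W h. open W \<and> x0 \<in> W \<and> C2_on W (h::'a \<Rightarrow> real) \<and> (\<forall>x\<in>M \<inter> W. \<Psi> x = ereal (h x))) \<and>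
     \<comment> \<open>(ii)\<close>
     (\<exists>a. affine hull (subdiff \<Psi> x0) = (\<lambda>w. a + w) ` normal_space M x0) \<and>
     \<comment> \<open>(iii)\<close>
     subdiff_continuous_rel \<Psi> M x0 \<and>
     \<comment> \<open>(iv) (regularity is automatic for convex functions at points with nonempty subdifferential)\<close>
     (\<exists>W. open W \<and> x0 \<in> W \<and> (\<forall>x\<in>M \<inter> W. subdiff \<Psi> x \<noteq> {}))"

definition local_param :: "(real^'n \<Rightarrow> 'a::euclidean_space) \<Rightarrow> 'a set \<Rightarrow> 'a \<Rightarrow> real^'n \<Rightarrow> bool" where
  "local_param \<phi> M x0 y0 \<longleftrightarrow>
     C2_on UNIV \<phi> \<and> (\<forall>y. \<phi> y \<in> M) \<and> \<phi> y0 = x0 \<and>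
     (\<exists>D. (\<phi> has_derivative D) (at y0) \<and> inj D) \<and>
     (\<exists>Y W. open Y \<and> y0 \<in> Y \<and> open W \<and> x0 \<in> W \<and> \<phi> ` Y = M \<inter> W)"

text \<open>F_phi = (f + Psi) o phi (real-valued version; Psi o phi is finite near y0).\<close>
definition F_phi :: "('a \<Rightarrow> real) \<Rightarrow> ('a \<Rightarrow> ereal) \<Rightarrow> (real^'n \<Rightarrow> 'a) \<Rightarrow> real^'n \<Rightarrow> real" where
  "F_phi f \<Psi> \<phi> y = f (\<phi> y) + real_of_ereal (\<Psi> (\<phi> y))"

definition clarke_jac :: "(real^'n \<Rightarrow> real^'m) \<Rightarrow> real^'n \<Rightarrow> (real^'n^'m) set" where
  "clarke_jac G y = convex hull {J. \<exists>ys Js. (\<forall>k. (G has_derivative (\<lambda>h. Js k *v h)) (at (ys k))) \<and>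
                                          ys \<longlonglongrightarrow> y \<and> Js \<longlonglongrightarrow> J}"

definition strongly_semismooth :: "(real^'n \<Rightarrow> real^'n) \<Rightarrow> real^'n \<Rightarrow> bool" where
  "strongly_semismooth G y0 \<longleftrightarrow>
     (\<forall>h. \<exists>L. ((\<lambda>t. (1 / t) *\<^sub>R (G (y0 + t *\<^sub>R h) - G y0)) \<longlongrightarrow> L) (at_right 0)) \<and>
     (\<exists>C \<delta>. \<delta> > 0 \<and> (\<forall>dy V. norm dy < \<delta> \<and> V \<in> clarke_jac G (y0 + dy) \<longrightarrow>
         norm (G (y0 + dy) - G y0 - V *v dy) \<le> C * (norm dy)^2))"

definition psd :: "real^'n^'n \<Rightarrow> bool" where
  "psd V \<longleftrightarrow> (\<forall>h. 0 \<le> h \<bullet> (V *v h))"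

end

theory Submission
  imports Defs
begin

text \<open>With \<open>d = y - y\<^sup>*\<close> and \<open>g = \<nabla>F\<^sub>\<phi>(y)\<close>, the regularised Newton matrix \<open>H = V + \<mu>I\<close> satisfies
  \<open>H(q + d) = (Hq + g) + \<mu>d - (g - Vd)\<close>. Positive semidefiniteness of \<open>V\<close> gives
  \<open>\<parallel>Hw\<parallel> \<ge> \<mu>\<parallel>w\<parallel>\<close>, the first term is the inexactness residual, and since \<open>y\<^sup>*\<close> is a stationary
  point of \<open>F\<^sub>\<phi>\<close> (it minimises \<open>\<Psi> + \<langle>\<nabla>f(x\<^sup>*), \<cdot>\<rangle>\<close> along the manifold), strong semismoothness
  bounds \<open>g - Vd = \<nabla>F\<^sub>\<phi>(y) - \<nabla>F\<^sub>\<phi>(y\<^sup>*) - Vd\<close> by \<open>O(\<parallel>d\<parallel>\<^sup>2)\<close>.\<close>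

lemma grad_eqI:
  assumes "(h has_derivative (\<lambda>v. g \<bullet> v)) (at x)"
  shows "grad h x = g"
proof -
  have "(h has_derivative (\<lambda>v. grad h x \<bullet> v)) (at x)"
    unfolding grad_def using assms by (rule someI)
  then have "(\<lambda>v. grad h x \<bullet> v) = (\<lambda>v. g \<bullet> v)"
    using assms has_derivative_unique by blast
  then have "(grad h x - g) \<bullet> (grad h x - g) = 0"
    by (metis inner_diff_left diff_self)
  then show ?thesis by simp
qed

lemma has_derivative_zero_at_linearized_local_min:
  fixes \<phi> :: "'b::real_normed_vector \<Rightarrow> 'a::real_inner" and k :: "'b \<Rightarrow> real"
  assumes f: "(f has_derivative (\<lambda>v. g \<bullet> v)) (at (\<phi> y0))"
    and \<phi>: "(\<phi> has_derivative D\<phi>) (at y0)"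
    and k: "(k has_derivative Dk) (at y0)"
    and min: "\<forall>\<^sub>F y in at y0. k y0 + g \<bullet> \<phi> y0 \<le> k y + g \<bullet> \<phi> y"
  shows "((\<lambda>y. f (\<phi> y) + k y) has_derivative (\<lambda>v. 0)) (at y0)"
proof -
  have "((\<lambda>y. k y + g \<bullet> \<phi> y) has_derivative (\<lambda>v. Dk v + g \<bullet> D\<phi> v)) (at y0)"
    by (intro has_derivative_add k has_derivative_inner_right \<phi>)
  then have D0: "(\<lambda>v. Dk v + g \<bullet> D\<phi> v) = (\<lambda>v. 0)"
    using has_derivative_local_min min by blast
  have "((\<lambda>y. f (\<phi> y) + k y) has_derivative (\<lambda>v. g \<bullet> D\<phi> v + Dk v)) (at y0)"
    using has_derivative_compose[OF \<phi> f] k by (intro has_derivative_add) (simp_all add: o_def)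
  then show ?thesis
    using D0 by (simp add: add.commute)
qed

lemma grad_F_phi_eq_0_at_stationary:
  assumes f_diff: "(f has_derivative (\<lambda>h. grad f xs \<bullet> h)) (at xs)"
    and stationary: "- grad f xs \<in> subdiff \<Psi> xs"
    and ps: "partly_smooth \<Psi> xs M"
    and param: "local_param \<phi> M xs ys"
  shows "grad (F_phi f \<Psi> \<phi>) ys = 0"
proof -
  obtain W h where W: "open W" "xs \<in> W" "C2_on W h" and \<Psi>_eq_h: "\<forall>x\<in>M \<inter> W. \<Psi> x = ereal (h x)"
    using ps unfolding partly_smooth_def by blast
  have "xs \<in> M" using ps unfolding partly_smooth_def by blast
  then have \<Psi>_xs: "\<Psi> xs = ereal (h xs)" using \<Psi>_eq_h W by blast
  obtain h' where h': "(h has_derivative blinfun_apply h') (at xs)"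
    using W unfolding C2_on_def by blast
  obtain \<phi>' where \<phi>': "(\<phi> has_derivative blinfun_apply \<phi>') (at ys)"
    using param unfolding local_param_def C2_on_def by blast
  have \<phi>_M: "\<And>y. \<phi> y \<in> M" and \<phi>_ys: "\<phi> ys = xs"
    using param unfolding local_param_def by auto
  have "(\<phi> \<longlongrightarrow> xs) (at ys)"
    using has_derivative_continuous[OF \<phi>'] \<phi>_ys by (simp add: isCont_def)
  then have near: "\<forall>\<^sub>F y in at ys. \<phi> y \<in> W"
    using topological_tendstoD W(1,2) by blast
  have "((\<lambda>y. h (\<phi> y)) has_derivative (\<lambda>u. h' (\<phi>' u))) (at ys)"
    using has_derivative_compose[OF \<phi>' h'[folded \<phi>_ys]] by (simp add: o_def)
  moreover have "\<forall>\<^sub>F y in at ys. h (\<phi> ys) + grad f xs \<bullet> \<phi> ys \<le> h (\<phi> y) + grad f xs \<bullet> \<phi> y"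
    using near
  proof (rule eventually_mono)
    fix y assume "\<phi> y \<in> W"
    then have "\<Psi> (\<phi> y) = ereal (h (\<phi> y))" using \<Psi>_eq_h \<phi>_M by blast
    moreover have "\<Psi> xs + ereal (- grad f xs \<bullet> (\<phi> y - xs)) \<le> \<Psi> (\<phi> y)"
      using stationary unfolding subdiff_def by blast
    ultimately show "h (\<phi> ys) + grad f xs \<bullet> \<phi> ys \<le> h (\<phi> y) + grad f xs \<bullet> \<phi> y"
      using \<Psi>_xs \<phi>_ys by (simp add: inner_diff_right)
  qed
  moreover have "(f has_derivative (\<lambda>v. grad f xs \<bullet> v)) (at (\<phi> ys))"
    using f_diff \<phi>_ys by simp
  ultimately have "((\<lambda>y. f (\<phi> y) + h (\<phi> y)) has_derivative (\<lambda>v. 0)) (at ys)"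
    using has_derivative_zero_at_linearized_local_min[OF _ \<phi>'] by blast
  moreover have "\<forall>\<^sub>F y in at ys. f (\<phi> y) + h (\<phi> y) = F_phi f \<Psi> \<phi> y"
    using near by (rule eventually_mono) (use \<Psi>_eq_h \<phi>_M in \<open>auto simp: F_phi_def\<close>)
  moreover have "f (\<phi> ys) + h (\<phi> ys) = F_phi f \<Psi> \<phi> ys"
    using \<Psi>_xs \<phi>_ys by (simp add: F_phi_def)
  ultimately have "(F_phi f \<Psi> \<phi> has_derivative (\<lambda>v. 0 \<bullet> v)) (at ys)"
    using has_derivative_transform_eventually by fastforce
  then show ?thesis by (rule grad_eqI)
qed

lemma psd_shift_norm_ge:
  assumes "psd V" "0 \<le> \<mu>"
  shows "\<mu> * norm w \<le> norm (V *v w + \<mu> *\<^sub>R w)"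
proof -
  have "\<mu> * norm w ^ 2 \<le> w \<bullet> (V *v w) + \<mu> * (w \<bullet> w)"
    using assms(1) unfolding psd_def by (simp add: power2_norm_eq_inner)
  also have "\<dots> = w \<bullet> (V *v w + \<mu> *\<^sub>R w)" by (simp add: inner_add_right)
  also have "\<dots> \<le> norm w * norm (V *v w + \<mu> *\<^sub>R w)" by (rule norm_cauchy_schwarz)
  finally have "(\<mu> * norm w) * norm w \<le> norm (V *v w + \<mu> *\<^sub>R w) * norm w"
    by (simp add: power2_eq_square mult.commute mult.left_commute)
  then show ?thesis
    by (cases "norm w = 0") (use assms(2) in auto)
qed

lemma regularized_newton_step_norm_le:
  assumes "psd V" "0 < \<mu>"
  shows "norm q \<le> 2 * norm d + norm (g - V *v d) / \<mu> + norm (V *v q + \<mu> *\<^sub>R q + g) / \<mu>"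
proof -
  define e where "e = g - V *v d"
  define r where "r = V *v q + \<mu> *\<^sub>R q + g"
  have "V *v (q + d) + \<mu> *\<^sub>R (q + d) = (r + \<mu> *\<^sub>R d) - e"
    unfolding r_def e_def by (simp add: matrix_vector_right_distrib algebra_simps)
  then have "\<mu> * norm (q + d) \<le> norm r + \<mu> * norm d + norm e"
    using psd_shift_norm_ge[OF assms(1), of \<mu> "q + d"] assms(2)
      norm_triangle_ineq4[of "r + \<mu> *\<^sub>R d" e] norm_triangle_ineq[of r "\<mu> *\<^sub>R d"]
    by simp
  then have "norm (q + d) \<le> norm d + norm e / \<mu> + norm r / \<mu>"
    using assms(2) by (simp add: field_simps)
  moreover have "norm q \<le> norm (q + d) + norm d"
    using norm_triangle_ineq4[of "q + d" d] by simp
  ultimately show ?thesis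
    unfolding e_def r_def by linarith
qed

theorem lemma4:
  fixes f :: "'a::euclidean_space \<Rightarrow> real" and \<Psi> :: "'a \<Rightarrow> ereal" and M :: "'a set"
    and \<phi> :: "real^'n \<Rightarrow> 'a" and xs :: 'a and ys :: "real^'n" and U :: "(real^'n) set"
    and c \<rho> :: real and G :: "real^'n \<Rightarrow> real^'n"
  assumes f_diff: "\<forall>x. (f has_derivative (\<lambda>h. grad f x \<bullet> h)) (at x)"
    and f_lip: "\<exists>L. L-lipschitz_on UNIV (grad f)"
    and Psi_convex: "convex_efun \<Psi>" and Psi_proper: "proper_fun \<Psi>" and Psi_lsc: "lsc_efun \<Psi>"
    and stationary: "- grad f xs \<in> subdiff \<Psi> xs"
    and ps: "partly_smooth \<Psi> xs M"
    and param: "local_param \<phi> M xs ys"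
    and G_def: "G = grad (F_phi f \<Psi> \<phi>)"
    and U: "open U" "ys \<in> U"
    and psd_U: "\<forall>y\<in>U. \<forall>V\<in>clarke_jac G y. psd V"
    and semismooth: "strongly_semismooth G ys"
    and c: "c > 0" and rho: "0 < \<rho>" "\<rho> \<le> 1"
  shows "\<exists>C \<delta>. \<delta> > 0 \<and>
    (\<forall>y\<in>U. norm (y - ys) < \<delta> \<longrightarrow> G y \<noteq> 0 \<longrightarrow>
      (\<forall>V\<in>clarke_jac G y. \<forall>q.
        norm (V *v q + (c * norm (G y) powr \<rho>) *\<^sub>R q + G y)
          \<le> 0.1 * min (norm (G y)) (norm (G y) powr (1 + \<rho>)) \<longrightarrow>
        norm q \<le> 2 * norm (y - ys) + C * (norm (y - ys))^2 / (c * norm (G y) powr \<rho>)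
                 + 0.1 * norm (G y) powr (1 + \<rho>) / (c * norm (G y) powr \<rho>)))"
proof -
  have G_ys: "G ys = 0"
    using grad_F_phi_eq_0_at_stationary f_diff stationary ps param G_def by blast
  obtain C \<delta> where "\<delta> > 0" and semismooth_bound: "\<And>dy V. norm dy < \<delta> \<Longrightarrow>
      V \<in> clarke_jac G (ys + dy) \<Longrightarrow> norm (G (ys + dy) - G ys - V *v dy) \<le> C * (norm dy)^2"
    using semismooth unfolding strongly_semismooth_def by blast
  show ?thesis
  proof (intro exI conjI ballI impI allI)
    fix y V q
    assume "y \<in> U" "norm (y - ys) < \<delta>" "G y \<noteq> 0" "V \<in> clarke_jac G y"
      and residual: "norm (V *v q + (c * norm (G y) powr \<rho>) *\<^sub>R q + G y)
          \<le> 0.1 * min (norm (G y)) (norm (G y) powr (1 + \<rho>))"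
    define \<mu> where "\<mu> = c * norm (G y) powr \<rho>"
    have "0 < \<mu>" unfolding \<mu>_def using c \<open>G y \<noteq> 0\<close> by simp
    have "norm (G y - V *v (y - ys)) / \<mu> \<le> C * (norm (y - ys))^2 / \<mu>"
      using semismooth_bound[of "y - ys" V] \<open>norm (y - ys) < \<delta>\<close> \<open>V \<in> clarke_jac G y\<close> G_ys \<open>0 < \<mu>\<close>
      by (simp add: divide_right_mono)
    moreover have "norm (V *v q + \<mu> *\<^sub>R q + G y) \<le> 0.1 * norm (G y) powr (1 + \<rho>)"
      using residual unfolding \<mu>_def by simp
    then have "norm (V *v q + \<mu> *\<^sub>R q + G y) / \<mu> \<le> 0.1 * norm (G y) powr (1 + \<rho>) / \<mu>"
      by (rule divide_right_mono) (use \<open>0 < \<mu>\<close> in simp)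
    moreover have "psd V" using psd_U \<open>y \<in> U\<close> \<open>V \<in> clarke_jac G y\<close> by blast
    ultimately show "norm q \<le> 2 * norm (y - ys) + C * (norm (y - ys))^2 / (c * norm (G y) powr \<rho>)
        + 0.1 * norm (G y) powr (1 + \<rho>) / (c * norm (G y) powr \<rho>)"
      using regularized_newton_step_norm_le[of V \<mu> q "y - ys" "G y"] \<open>0 < \<mu>\<close>
      unfolding \<mu>_def by linarith
  qed (fact \<open>\<delta> > 0\<close>)
qed

end
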